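(* Let $A,B\in\mathbb{R}^{n\times n}$ satisfy $\mathrm{rank}(A-B)=\mathrm{rank}(A)-\mathrm{rank}(B)$, $A+A^T>0$ (positive definite) and $B+B^T\ge0$ (positive semidefinite). Then $\ker B=\ker(B+B^T)$. *)

theory Defs
  imports "HOL-Analysis.Analysis"
begin

definition pos_def_mat :: "real^'n^'n \<Rightarrow> bool" where
  "pos_def_mat M \<longleftrightarrow> M = transpose M \<and> (\<forall>x. x \<noteq> 0 \<longrightarrow> x \<bullet> (M *v x) > 0)"

definition pos_semidef_mat :: "real^'n^'n \<Rightarrow> bool" where
  "pos_semidef_mat M \<longleftrightarrow> M = transpose M \<and> (\<forall>x. x \<bullet> (M *v x) \<ge> 0)"

definition ker_mat :: "real^'n^'m \<Rightarrow> (real^'n) set" where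
  "ker_mat M = {x. M *v x = 0}"

end

theory Submission
  imports Defs
begin

text \<open>
  Since \<open>A + A\<^sup>T\<close> is definite, \<open>A\<close> is invertible, and the rank condition says that the
  ranges of \<open>A - B\<close> and \<open>B\<close> meet only in \<open>0\<close>. If \<open>(B + B\<^sup>T) x = 0\<close>, solve \<open>A z = B x\<close>; then
  \<open>(A - B) z = B (x - z)\<close> lies in both ranges, so \<open>A z = B z = B x\<close>. Skew-symmetry of \<open>B\<close> on \<open>x\<close>
  gives \<open>z \<bullet> A z = z \<bullet> B x = -(x \<bullet> B z) = -(x \<bullet> B x) = 0\<close>, hence \<open>z = 0\<close> and \<open>B x = 0\<close>.
  The converse inclusion is the usual fact that a semidefinite form vanishing at \<open>x\<close> kills \<open>x\<close>.
\<close>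

lemma quadratic_nonneg_imp_linear_coeff_eq_0:
  fixes a b :: real
  assumes "\<And>t. 0 \<le> a * t + b * t\<^sup>2"
  shows "a = 0"
proof (rule ccontr)
  assume "a \<noteq> 0"
  define c where "c = \<bar>b\<bar> + 1"
  have "c > 0" "b \<le> c - 1" by (auto simp: c_def)
  have "0 \<le> a * (- a / c) + b * (- a / c)\<^sup>2" by (rule assms)
  also have "\<dots> \<le> a * (- a / c) + (c - 1) * (- a / c)\<^sup>2"
    using \<open>b \<le> c - 1\<close> by (simp add: mult_right_mono)
  also have "\<dots> = - (a / c)\<^sup>2"
    using \<open>c > 0\<close> by (simp add: field_simps power2_eq_square)
  also have "\<dots> < 0" using \<open>a \<noteq> 0\<close> \<open>c > 0\<close> by simp
  finally show False by simp
qed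

lemma inner_matrix_vector_transpose:
  fixes M :: "real^'n^'m"
  shows "x \<bullet> (M *v y) = (transpose M *v x) \<bullet> y"
  by (simp add: dot_lmul_matrix)

lemma quadratic_form_add_transpose:
  fixes M :: "real^'n^'n"
  shows "x \<bullet> ((M + transpose M) *v x) = 2 * (x \<bullet> (M *v x))"
  by (simp add: matrix_vector_mult_add_rdistrib inner_add_right
      inner_matrix_vector_transpose[of x M x] inner_commute)

lemma pos_semidef_mat_quadratic_form_eq_0:
  fixes M :: "real^'n^'n"
  assumes "pos_semidef_mat M" and "x \<bullet> (M *v x) = 0"
  shows "M *v x = 0"
proof -
  have sym: "transpose M = M" and nonneg: "\<And>v. 0 \<le> v \<bullet> (M *v v)"
    using assms(1) by (auto simp: pos_semidef_mat_def)
  define y where "y = M *v x"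
  have "0 \<le> (2 * (y \<bullet> y)) * t + (y \<bullet> (M *v y)) * t\<^sup>2" for t
  proof -
    have "x \<bullet> (M *v y) = y \<bullet> y"
      using inner_matrix_vector_transpose[of x M y] sym by (simp add: y_def inner_commute)
    then have "(x + t *\<^sub>R y) \<bullet> (M *v (x + t *\<^sub>R y))
        = (2 * (y \<bullet> y)) * t + (y \<bullet> (M *v y)) * t\<^sup>2"
      using assms(2) by (simp add: y_def matrix_vector_right_distrib matrix_vector_mult_scaleR
          inner_add_left inner_add_right algebra_simps power2_eq_square)
    then show ?thesis using nonneg by metis
  qed
  then have "2 * (y \<bullet> y) = 0" by (rule quadratic_nonneg_imp_linear_coeff_eq_0)
  then show ?thesis by (simp add: y_def)
qed

lemma pos_def_mat_add_transpose_quadratic_form_eq_0: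
  fixes A :: "real^'n^'n"
  assumes "pos_def_mat (A + transpose A)" and "z \<bullet> (A *v z) = 0"
  shows "z = 0"
  using assms quadratic_form_add_transpose[of z A] unfolding pos_def_mat_def by force

lemma surj_matrix_vector_mult_if_quadratic_form_definite:
  fixes A :: "real^'n^'n"
  assumes "\<And>z. z \<bullet> (A *v z) = 0 \<Longrightarrow> z = 0"
  shows "surj ((*v) A)"
proof -
  have "inj ((*v) A)"
  proof (rule injI)
    fix x y assume "A *v x = A *v y"
    then have "A *v (x - y) = 0" by (simp add: matrix_vector_mult_diff_distrib)
    then show "x = y" using assms[of "x - y"] by simp
  qed
  then have "rank A = CARD('n)" by (simp add: full_rank_injective)
  then show ?thesis by (simp add: full_rank_surjective)
qed

lemma range_Int_subset_zero_if_rank_add: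
  fixes C D :: "real^'n^'m"
  assumes "rank (C + D) = rank C + rank D"
  shows "range ((*v) C) \<inter> range ((*v) D) \<subseteq> {0}"
proof -
  let ?R = "range ((*v) C)" and ?S = "range ((*v) D)"
  have sub: "subspace ?R" "subspace ?S"
    by (simp_all add: subspace_UNIV linear_subspace_image matrix_vector_mul_linear)
  have "range ((*v) (C + D)) \<subseteq> {x + y |x y. x \<in> ?R \<and> y \<in> ?S}"
    by (auto simp: matrix_vector_mult_add_rdistrib)
  then have "rank (C + D) \<le> dim {x + y |x y. x \<in> ?R \<and> y \<in> ?S}"
    by (simp add: rank_dim_range dim_subset)
  with dim_sums_Int[OF sub] assms have "dim (?R \<inter> ?S) = 0"
    unfolding rank_dim_range by linarith
  then show ?thesis by simp
qed

lemma ker_add_transpose_subset_ker: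
  fixes A B :: "real^'n^'n"
  assumes definite: "\<And>z. z \<bullet> (A *v z) = 0 \<Longrightarrow> z = 0"
    and ranges: "range ((*v) (A - B)) \<inter> range ((*v) B) \<subseteq> {0}"
    and x: "(B + transpose B) *v x = 0"
  shows "B *v x = 0"
proof -
  obtain z where z: "A *v z = B *v x"
    using surj_matrix_vector_mult_if_quadratic_form_definite[OF definite] by (metis surjD)
  have "(A - B) *v z = B *v (x - z)"
    using z by (simp add: matrix_vector_mult_diff_rdistrib matrix_vector_mult_diff_distrib)
  with ranges have "(A - B) *v z = 0" by blast
  with z have Bz: "B *v z = B *v x" by (simp add: matrix_vector_mult_diff_rdistrib)
  have skew: "transpose B *v x = - (B *v x)"
    using x by (simp add: matrix_vector_mult_add_rdistrib eq_neg_iff_add_eq_0 add.commute)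
  have "x \<bullet> (B *v x) = 0"
    using quadratic_form_add_transpose[of x B] x by simp
  then have "(transpose B *v x) \<bullet> z = 0"
    using inner_matrix_vector_transpose[of x B z] Bz by simp
  then have "z \<bullet> (A *v z) = 0"
    using skew z by (simp add: inner_commute)
  then have "z = 0" by (rule definite)
  with z show ?thesis by simp
qed

theorem lemma3:
  fixes A B :: "real^'n^'n"
  assumes "int (rank (A - B)) = int (rank A) - int (rank B)"
    and "pos_def_mat (A + transpose A)"
    and "pos_semidef_mat (B + transpose B)"
  shows "ker_mat B = ker_mat (B + transpose B)"
proof -
  have "rank ((A - B) + B) = rank (A - B) + rank B" using assms(1) by simp
  then have ranges: "range ((*v) (A - B)) \<inter> range ((*v) B) \<subseteq> {0}"
    by (rule range_Int_subset_zero_if_rank_add)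
  have definite: "\<And>z. z \<bullet> (A *v z) = 0 \<Longrightarrow> z = 0"
    using assms(2) by (rule pos_def_mat_add_transpose_quadratic_form_eq_0)
  have "B *v x = 0 \<longleftrightarrow> (B + transpose B) *v x = 0" for x
  proof
    assume "B *v x = 0"
    then have "x \<bullet> ((B + transpose B) *v x) = 0" by (simp add: quadratic_form_add_transpose)
    with assms(3) show "(B + transpose B) *v x = 0" by (rule pos_semidef_mat_quadratic_form_eq_0)
  next
    assume "(B + transpose B) *v x = 0"
    with definite ranges show "B *v x = 0" by (rule ker_add_transpose_subset_ker)
  qed
  then show ?thesis by (auto simp: ker_mat_def)
qed

end
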